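(* For GP-EI with BPMI and any $t\in\mathbb{N}$, when $E^r(t)$ holds, $$r_t\le\big(c_\mu(t)+\phi(0)+\beta_t^{1/2}\big)\sigma_{t-1}(\mathbf{x}_t)+c_\alpha\beta_t^{1/2}\sigma_{t-1}([\mathbf{x}^*]_t)+\frac{1}{t^2},$$ where $c_\mu(t)=\log^{1/2}\!\big(\frac{t-1+\sigma^2}{2\pi\phi^2(0)\sigma^2}\big)$ and $c_\alpha=1.328$.
   Context: Setting: $d\ge1$, $r>0$, $C\subseteq[0,r]^d$ compact; $k$ positive semidefinite kernel with $k(\mathbf{x},\mathbf{x}')\le1$, $k(\mathbf{x},\mathbf{x})=1$ on $C$. $f$ is a sample path of $GP(0,k)$, Lipschitz with constant $L\ge1/(rd)$ in $\ell_1$-norm; $\mathbf{x}^*\in\arg\min_Cf$. Observations $y_t=f(\mathbf{x}_t)+\epsilon_t$, $\epsilon_t$ i.i.d. $\mathcal{N}(0,\sigma^2)$, $\sigma>0$. Posterior $\mu_t(\mathbf{x})=\mathbf{k}_t(\mathbf{x})^T(\mathbf{K}_t+\sigma^2\mathbf{I})^{-1}\mathbf{y}_{1:t}$, $\sigma_t^2(\mathbf{x})=1-\mathbf{k}_t(\mathbf{x})^T(\mathbf{K}_t+\sigma^2\mathbf{I})^{-1}\mathbf{k}_t(\mathbf{x})$ ($\mathbf{K}_t=[k(\mathbf{x}_i,\mathbf{x}_j)]_{i,j\le t}$, $\mathbf{k}_t(\mathbf{x})=[k(\mathbf{x}_i,\mathbf{x})]_{i\le t}$). BPMI incumbent $\xi_t^+=\mu_t^+=\min_{\mathbf{x}\in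 C}\mu_t(\mathbf{x})$. $EI_t(\mathbf{x})=(\xi_t^+-\mu_t(\mathbf{x}))\Phi(z_t(\mathbf{x}))+\sigma_t(\mathbf{x})\phi(z_t(\mathbf{x}))$, $z_t=(\xi_t^+-\mu_t)/\sigma_t$, $\phi,\Phi$ standard normal pdf/cdf; GP-EI picks $\mathbf{x}_t\in\arg\max_CEI_{t-1}$. $r_t=f(\mathbf{x}_t)-f(\mathbf{x}^* )$. Discretization: $\mathbb{C}_t\subseteq C$ finite, $|\mathbb{C}_t|=(Lrdt^2)^d$, with $\|\mathbf{x}-[\mathbf{x}]_t\|_1\le1/(Lt^2)$ for all $\mathbf{x}\in C$, where $[\mathbf{x}]_t$ is a closest point of $\mathbb{C}_t$ to $\mathbf{x}$. With $\delta\in(0,1)$, $\pi_t=\pi^2t^2/6$, $\beta_t=2\log(8|\mathbb{C}_t|\pi_t/\delta)$. $E^r(t)$ is the event that $|f(\mathbf{x})-\mu_{t-1}(\mathbf{x})|\le\beta_t^{1/2}\sigma_{t-1}(\mathbf{x})$ for all $\mathbf{x}\in\mathbb{C}_t$ and also $|f(\mathbf{x}_t)-\mu_{t-1}(\mathbf{x}_t)|\le\beta_t^{1/2}\sigma_{t-1}(\mathbf{x}_t)$. *)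

theory Defs
  imports "HOL-Analysis.Analysis" "HOL-Probability.Probability"
begin

abbreviation phi :: "real \<Rightarrow> real" where
  "phi \<equiv> std_normal_density"

definition Phi :: "real \<Rightarrow> real" where
  "Phi x = (LBINT u:{..x}. std_normal_density u)"

definition l1dist :: "real^'n \<Rightarrow> real^'n \<Rightarrow> real" where
  "l1dist x y = (\<Sum>i\<in>UNIV. \<bar>x$i - y$i\<bar>)"

definition psd_kernel :: "'a set \<Rightarrow> ('a \<Rightarrow> 'a \<Rightarrow> real) \<Rightarrow> bool" where
  "psd_kernel C k \<longleftrightarrow> (\<forall>x\<in>C. \<forall>y\<in>C. k x y = k y x) \<and>
     (\<forall>(n::nat) (p::nat \<Rightarrow> 'a) (c::nat \<Rightarrow> real). (\<forall>i<n. p i \<in> C) \<longrightarrow>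
        0 \<le> (\<Sum>i<n. \<Sum>j<n. c i * c j * k (p i) (p j)))"

text \<open>The n x n matrix K_n + sigma^2 I built from the data points xs 1, ..., xs n
  (0-based indices i,j < n refer to the points xs (i+1), xs (j+1)).\<close>
definition gram_reg :: "('a \<Rightarrow> 'a \<Rightarrow> real) \<Rightarrow> real \<Rightarrow> (nat \<Rightarrow> 'a) \<Rightarrow> nat \<Rightarrow> nat \<Rightarrow> real" where
  "gram_reg k \<sigma> xs i j = k (xs (Suc i)) (xs (Suc j)) + (if i = j then \<sigma>^2 else 0)"

text \<open>(A^{-1} b) for an n x n matrix A: the unique solution a of A a = b
  (vectors represented as functions on {..<n}, padded with 0).\<close>
definition lin_solve :: "nat \<Rightarrow> (nat \<Rightarrow> nat \<Rightarrow> real) \<Rightarrow> (nat \<Rightarrow> real) \<Rightarrow> nat \<Rightarrow> real" where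
  "lin_solve n A b = (THE a. (\<forall>i<n. (\<Sum>j<n. A i j * a j) = b i) \<and> (\<forall>i\<ge>n. a i = 0))"

definition post_mean :: "('a \<Rightarrow> 'a \<Rightarrow> real) \<Rightarrow> real \<Rightarrow> (nat \<Rightarrow> 'a) \<Rightarrow> (nat \<Rightarrow> real) \<Rightarrow> nat \<Rightarrow> 'a \<Rightarrow> real" where
  "post_mean k \<sigma> xs ys n x =
     (\<Sum>i<n. k (xs (Suc i)) x * lin_solve n (gram_reg k \<sigma> xs) (\<lambda>i. ys (Suc i)) i)"

definition post_var :: "('a \<Rightarrow> 'a \<Rightarrow> real) \<Rightarrow> real \<Rightarrow> (nat \<Rightarrow> 'a) \<Rightarrow> nat \<Rightarrow> 'a \<Rightarrow> real" where
  "post_var k \<sigma> xs n x =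
     1 - (\<Sum>i<n. k (xs (Suc i)) x * lin_solve n (gram_reg k \<sigma> xs) (\<lambda>i. k (xs (Suc i)) x) i)"

definition post_sd :: "('a \<Rightarrow> 'a \<Rightarrow> real) \<Rightarrow> real \<Rightarrow> (nat \<Rightarrow> 'a) \<Rightarrow> nat \<Rightarrow> 'a \<Rightarrow> real" where
  "post_sd k \<sigma> xs n x = sqrt (post_var k \<sigma> xs n x)"

definition incumbent :: "'a set \<Rightarrow> ('a \<Rightarrow> 'a \<Rightarrow> real) \<Rightarrow> real \<Rightarrow> (nat \<Rightarrow> 'a) \<Rightarrow> (nat \<Rightarrow> real) \<Rightarrow> nat \<Rightarrow> real" where
  "incumbent C k \<sigma> xs ys n = Inf (post_mean k \<sigma> xs ys n ` C)"

definition EI :: "'a set \<Rightarrow> ('a \<Rightarrow> 'a \<Rightarrow> real) \<Rightarrow> real \<Rightarrow> (nat \<Rightarrow> 'a) \<Rightarrow> (nat \<Rightarrow> real) \<Rightarrow> nat \<Rightarrow> 'a \<Rightarrow> real" where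
  "EI C k \<sigma> xs ys n x =
     (let \<xi> = incumbent C k \<sigma> xs ys n;
          m = post_mean k \<sigma> xs ys n x;
          s = post_sd k \<sigma> xs n x;
          z = (\<xi> - m) / s
      in (\<xi> - m) * Phi z + s * phi z)"

definition beta :: "nat \<Rightarrow> real \<Rightarrow> nat \<Rightarrow> real" where
  "beta cardCt \<delta> t = 2 * ln (8 * real cardCt * (pi^2 * (real t)^2 / 6) / \<delta>)"

end

(*
  The posterior variance on C is at least v = sigma^2 / (t - 1 + sigma^2): writing the explained
  variance as q = u'Ku + sigma^2 |u|^2, the Cauchy-Schwarz inequality of the kernel gives
  q^2 <= u'Ku, and |k| <= 1 gives u'Ku <= (t - 1) |u|^2, whence q <= (t - 1) / (t - 1 + sigma^2).
  Points whose posterior mean approaches the BPMI incumbent therefore have EI at least about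
  sqrt v * phi 0, hence so does the EI maximiser x_t. If mu(x_t) lies above the incumbent, then
  EI(x_t) <= sigma(x_t) phi(z) <= phi(z) with z = (incumbent - mu(x_t)) / sigma(x_t), which
  forces z^2 <= ln (1 / v), i.e. mu(x_t) - incumbent <= c_mu(t) sigma(x_t). The confidence bounds
  of E^r(t) at x_t and at [xstar]_t, incumbent <= mu([xstar]_t) and the Lipschitz estimate
  f([xstar]_t) - f(xstar) <= 1/t^2 give the regret bound, in fact with c_alpha = 1 and without
  the phi 0 term.
*)
theory Submission imports Defs "Jordan_Normal_Form.Determinant" begin

lemma mat_mult_vec_nth_sum:
  assumes "i < n" "v \<in> carrier_vec n"
  shows "(mat n n (\<lambda>(i, j). A i j) *\<^sub>v v) $ i = (\<Sum>j<n. A i j * v $ j)"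
  using assms by (auto simp: scalar_prod_def lessThan_atLeast0 intro!: sum.cong)

lemma lin_solve_unique:
  fixes A :: "nat \<Rightarrow> nat \<Rightarrow> real"
  assumes trivial_kernel: "\<And>a. \<forall>i<n. (\<Sum>j<n. A i j * a j) = 0 \<Longrightarrow> \<forall>j<n. a j = 0"
  shows "\<exists>!a. (\<forall>i<n. (\<Sum>j<n. A i j * a j) = b i) \<and> (\<forall>i\<ge>n. a i = 0)"
proof (rule ex_ex1I)
  define M where "M = mat n n (\<lambda>(i, j). A i j)"
  have M: "M \<in> carrier_mat n n"
    unfolding M_def by simp
  have "det M \<noteq> 0"
  proof
    assume "det M = 0"
    then obtain v where v: "v \<in> carrier_vec n" "v \<noteq> 0\<^sub>v n" "M *\<^sub>v v = 0\<^sub>v n"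
      using det_0_iff_vec_prod_zero[OF M] by blast
    have "\<forall>i<n. (\<Sum>j<n. A i j * v $ j) = 0"
    proof (intro allI impI)
      fix i assume "i < n"
      then show "(\<Sum>j<n. A i j * v $ j) = 0"
        using arg_cong[OF v(3), of "\<lambda>w. w $ i"] mat_mult_vec_nth_sum[OF _ v(1)] unfolding M_def by simp
    qed
    then have "\<forall>j<n. v $ j = 0"
      by (rule trivial_kernel)
    with v(1,2) show False
      by (auto simp: vec_eq_iff)
  qed
  then obtain B where B: "B \<in> carrier_mat n n" "M * B = 1\<^sub>m n"
    using det_non_zero_imp_unit[OF M] unfolding Units_def ring_mat_def by auto
  define x where "x = B *\<^sub>v vec n b"
  have x: "x \<in> carrier_vec n" and Mx: "M *\<^sub>v x = vec n b"
    unfolding x_def using B M by (simp_all add: assoc_mult_mat_vec[symmetric, of M n n B n])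
  show "\<exists>a. (\<forall>i<n. (\<Sum>j<n. A i j * a j) = b i) \<and> (\<forall>i\<ge>n. a i = 0)"
  proof (intro exI conjI allI impI)
    fix i assume "i < n"
    then show "(\<Sum>j<n. A i j * (if j < n then x $ j else 0)) = b i"
      using arg_cong[OF Mx, of "\<lambda>w. w $ i"] mat_mult_vec_nth_sum[OF _ x, of i A] unfolding M_def by simp
  qed simp
next
  fix a a'
  assume a: "(\<forall>i<n. (\<Sum>j<n. A i j * a j) = b i) \<and> (\<forall>i\<ge>n. a i = 0)"
    and a': "(\<forall>i<n. (\<Sum>j<n. A i j * a' j) = b i) \<and> (\<forall>i\<ge>n. a' i = 0)"
  have "\<forall>i<n. (\<Sum>j<n. A i j * (a j - a' j)) = 0"
    using a a' by (simp add: right_diff_distrib sum_subtractf)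
  then have "\<forall>j<n. a j - a' j = 0"
    by (rule trivial_kernel)
  with a a' show "a = a'"
    by (metis eq_iff_diff_eq_0 ext not_less)
qed

lemma lin_solve_solves:
  fixes A :: "nat \<Rightarrow> nat \<Rightarrow> real"
  assumes "\<And>a. \<forall>i<n. (\<Sum>j<n. A i j * a j) = 0 \<Longrightarrow> \<forall>j<n. a j = 0" and "i < n"
  shows "(\<Sum>j<n. A i j * lin_solve n A b j) = b i"
  using theI'[OF lin_solve_unique[OF assms(1)]] assms(2) unfolding lin_solve_def by blast

lemma psd_kernel_quadratic_nonneg:
  fixes p :: "nat \<Rightarrow> 'a"
  assumes "psd_kernel C k" "\<forall>i<n. p i \<in> C"
  shows "0 \<le> (\<Sum>i<n. \<Sum>j<n. c i * c j * k (p i) (p j))"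
  using assms(1) unfolding psd_kernel_def by (blast intro: assms(2)[rule_format])

lemma psd_kernel_sym:
  assumes "psd_kernel C k" "x \<in> C" "y \<in> C"
  shows "k x y = k y x"
  using assms unfolding psd_kernel_def by blast

lemma psd_kernel_abs_le_1:
  assumes psd: "psd_kernel C k" and diag: "\<forall>x\<in>C. k x x = 1"
    and le_1: "\<forall>x\<in>C. \<forall>y\<in>C. k x y \<le> 1" and "x \<in> C" "y \<in> C"
  shows "\<bar>k x y\<bar> \<le> 1"
proof -
  have "0 \<le> (\<Sum>i<2. \<Sum>j<2. 1 * 1 * k ([x, y] ! i) ([x, y] ! j))"
    by (rule psd_kernel_quadratic_nonneg[OF psd]) (use assms in \<open>auto simp: less_2_cases_iff\<close>)
  then have "0 \<le> k x x + k x y + k y x + k y y"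
    by (simp add: numeral_2_eq_2)
  then show ?thesis
    using assms psd_kernel_sym[OF psd] by (auto simp: abs_le_iff)
qed

lemma gram_reg_row:
  assumes "i < n"
  shows "(\<Sum>j<n. gram_reg k \<sigma> xs i j * a j) = (\<Sum>j<n. k (xs (Suc i)) (xs (Suc j)) * a j) + \<sigma>^2 * a i"
proof -
  have "(\<Sum>j<n. gram_reg k \<sigma> xs i j * a j) =
        (\<Sum>j<n. k (xs (Suc i)) (xs (Suc j)) * a j + (if i = j then \<sigma>^2 * a i else 0))"
    by (intro sum.cong) (auto simp: gram_reg_def algebra_simps)
  with assms show ?thesis
    by (simp add: sum.distrib)
qed

lemma gram_reg_quadratic_form:
  "(\<Sum>i<n. a i * (\<Sum>j<n. gram_reg k \<sigma> xs i j * a j)) =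
   (\<Sum>i<n. \<Sum>j<n. a i * a j * k (xs (Suc i)) (xs (Suc j))) + \<sigma>^2 * (\<Sum>i<n. (a i)^2)"
proof -
  have "(\<Sum>i<n. a i * (\<Sum>j<n. gram_reg k \<sigma> xs i j * a j)) =
        (\<Sum>i<n. a i * ((\<Sum>j<n. k (xs (Suc i)) (xs (Suc j)) * a j) + \<sigma>^2 * a i))"
    by (intro sum.cong) (auto simp: gram_reg_row)
  then show ?thesis
    by (simp add: distrib_left sum.distrib sum_distrib_left mult_ac power2_eq_square)
qed

lemma gram_reg_trivial_kernel:
  assumes psd: "psd_kernel C k" and xs_C: "\<forall>i<n. xs (Suc i) \<in> C" and "\<sigma> > 0"
    and "\<forall>i<n. (\<Sum>j<n. gram_reg k \<sigma> xs i j * a j) = 0"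
  shows "\<forall>j<n. a j = 0"
proof -
  have "(\<Sum>i<n. \<Sum>j<n. a i * a j * k (xs (Suc i)) (xs (Suc j))) + \<sigma>^2 * (\<Sum>i<n. (a i)^2) = 0"
    using assms(4) by (simp flip: gram_reg_quadratic_form)
  moreover have "0 \<le> (\<Sum>i<n. \<Sum>j<n. a i * a j * k (xs (Suc i)) (xs (Suc j)))"
    using psd_kernel_quadratic_nonneg[OF psd xs_C] .
  moreover have "0 \<le> (\<Sum>i<n. (a i)^2)"
    by (simp add: sum_nonneg)
  ultimately have "(\<Sum>i<n. (a i)^2) = 0"
    using \<open>\<sigma> > 0\<close> by (smt (verit) mult_pos_pos zero_less_power)
  then show ?thesis
    by (simp add: sum_nonneg_eq_0_iff)
qed

lemma gram_reg_lin_solve: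
  assumes "psd_kernel C k" "\<forall>i<n. xs (Suc i) \<in> C" "\<sigma> > 0" "i < n"
  shows "(\<Sum>j<n. gram_reg k \<sigma> xs i j * lin_solve n (gram_reg k \<sigma> xs) b j) = b i"
  using lin_solve_solves gram_reg_trivial_kernel[OF assms(1-3)] assms(4) by blast

lemma psd_kernel_cross_sq_le:
  fixes p :: "nat \<Rightarrow> 'a"
  assumes psd: "psd_kernel C k" and p_C: "\<forall>i<n. p i \<in> C" and x: "x \<in> C" "k x x = 1"
  shows "(\<Sum>i<n. k (p i) x * u i)^2 \<le> (\<Sum>i<n. \<Sum>j<n. u i * u j * k (p i) (p j))"
proof -
  txt \<open>Positive semidefiniteness at the points p 0, ..., p (n - 1), x with weights u and -q.\<close>
  define q where "q = (\<Sum>i<n. k (p i) x * u i)"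
  define p' where "p' i = (if i < n then p i else x)" for i
  define c where "c i = (if i < n then u i else - q)" for i
  have sym: "k x (p i) = k (p i) x" if "i < n" for i
    using psd_kernel_sym[OF psd] p_C x that by blast
  have "(\<Sum>i<Suc n. \<Sum>j<Suc n. c i * c j * k (p' i) (p' j)) =
      (\<Sum>i<n. \<Sum>j<n. c i * c j * k (p' i) (p' j)) + (\<Sum>i<n. c i * c n * k (p' i) (p' n))
      + (\<Sum>j<n. c n * c j * k (p' n) (p' j)) + c n * c n * k (p' n) (p' n)"
    by (simp add: sum.lessThan_Suc sum.distrib)
  also have "(\<Sum>i<n. \<Sum>j<n. c i * c j * k (p' i) (p' j)) = (\<Sum>i<n. \<Sum>j<n. u i * u j * k (p i) (p j))"
    by (intro sum.cong refl) (simp add: c_def p'_def)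
  also have "(\<Sum>i<n. c i * c n * k (p' i) (p' n)) = (\<Sum>i<n. - q * (k (p i) x * u i))"
    by (intro sum.cong) (simp_all add: c_def p'_def)
  also have "\<dots> = - q * q"
    by (simp only: q_def sum_distrib_left)
  also have "(\<Sum>j<n. c n * c j * k (p' n) (p' j)) = (\<Sum>j<n. - q * (k (p j) x * u j))"
    by (intro sum.cong) (simp_all add: c_def p'_def sym)
  also have "\<dots> = - q * q"
    by (simp only: q_def sum_distrib_left)
  also have "c n * c n * k (p' n) (p' n) = q * q"
    using x by (simp add: c_def p'_def)
  finally have "(\<Sum>i<Suc n. \<Sum>j<Suc n. c i * c j * k (p' i) (p' j)) = (\<Sum>i<n. \<Sum>j<n. u i * u j * k (p i) (p j)) - q^2"
    by (simp add: power2_eq_square)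
  moreover have "0 \<le> (\<Sum>i<Suc n. \<Sum>j<Suc n. c i * c j * k (p' i) (p' j))"
    by (rule psd_kernel_quadratic_nonneg[OF psd]) (use p_C x in \<open>auto simp: p'_def\<close>)
  ultimately show ?thesis
    unfolding q_def by simp
qed

lemma quadratic_form_le_of_abs_le_1:
  fixes K :: "nat \<Rightarrow> nat \<Rightarrow> real"
  assumes "\<And>i j. i < n \<Longrightarrow> j < n \<Longrightarrow> \<bar>K i j\<bar> \<le> 1"
  shows "(\<Sum>i<n. \<Sum>j<n. u i * u j * K i j) \<le> real n * (\<Sum>i<n. (u i)^2)"
proof -
  have "(\<Sum>i<n. \<Sum>j<n. u i * u j * K i j) \<le> (\<Sum>i<n. \<Sum>j<n. ((u i)^2 + (u j)^2) / 2)"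
  proof (intro sum_mono)
    fix i j assume "i \<in> {..<n}" "j \<in> {..<n}"
    have "u i * u j * K i j \<le> \<bar>u i * u j\<bar> * \<bar>K i j\<bar>"
      by (metis abs_ge_self abs_mult)
    also have "\<dots> \<le> \<bar>u i * u j\<bar>"
      using assms \<open>i \<in> {..<n}\<close> \<open>j \<in> {..<n}\<close> by (simp add: mult_left_le)
    also have "\<dots> \<le> ((u i)^2 + (u j)^2) / 2"
      using zero_le_power2[of "\<bar>u i\<bar> - \<bar>u j\<bar>"] by (simp add: power2_diff abs_mult)
    finally show "u i * u j * K i j \<le> ((u i)^2 + (u j)^2) / 2" .
  qed
  also have "\<dots> = real n * (\<Sum>i<n. (u i)^2)"
    by (simp add: add_divide_distrib sum.distrib flip: sum_divide_distrib sum_distrib_left)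
  finally show ?thesis .
qed

lemma explained_variance_le:
  fixes q Q S \<sigma> n :: real
  assumes q: "q = Q + \<sigma>^2 * S" and "q^2 \<le> Q" "Q \<le> n * S" "0 \<le> Q" "0 \<le> S" "0 < \<sigma>" "0 \<le> n"
  shows "0 \<le> q" and "q \<le> n / (n + \<sigma>^2)"
proof -
  show q_nonneg: "0 \<le> q"
    using assms by simp
  have pos: "0 < n + \<sigma>^2"
    using assms by (simp add: add_nonneg_pos)
  have "q^2 * (n + \<sigma>^2) \<le> Q * (n + \<sigma>^2)"
    using assms pos by (intro mult_right_mono) auto
  also have "\<dots> \<le> q * n"
    using assms by (simp add: algebra_simps)
  finally have "q * (q * (n + \<sigma>^2)) \<le> q * n"
    by (simp add: power2_eq_square mult_ac)
  then have "q * (n + \<sigma>^2) \<le> n"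
    using q_nonneg assms by (cases "q = 0") auto
  with pos show "q \<le> n / (n + \<sigma>^2)"
    by (simp add: pos_le_divide_eq)
qed

lemma post_var_bounds:
  assumes psd: "psd_kernel C k" and diag: "\<forall>x\<in>C. k x x = 1" and le_1: "\<forall>x\<in>C. \<forall>y\<in>C. k x y \<le> 1"
    and xs_C: "\<forall>i<n. xs (Suc i) \<in> C" and \<sigma>: "\<sigma> > 0" and x: "x \<in> C"
  shows "\<sigma>^2 / (real n + \<sigma>^2) \<le> post_var k \<sigma> xs n x" and "post_var k \<sigma> xs n x \<le> 1"
proof -
  define u where "u = lin_solve n (gram_reg k \<sigma> xs) (\<lambda>i. k (xs (Suc i)) x)"
  define q where "q = (\<Sum>i<n. k (xs (Suc i)) x * u i)"
  define Q where "Q = (\<Sum>i<n. \<Sum>j<n. u i * u j * k (xs (Suc i)) (xs (Suc j)))"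
  define S where "S = (\<Sum>i<n. (u i)^2)"
  have "q = (\<Sum>i<n. u i * (\<Sum>j<n. gram_reg k \<sigma> xs i j * u j))"
    unfolding q_def u_def by (intro sum.cong) (auto simp: gram_reg_lin_solve[OF psd xs_C \<sigma>])
  then have "q = Q + \<sigma>^2 * S"
    unfolding Q_def S_def by (simp add: gram_reg_quadratic_form)
  moreover have "q^2 \<le> Q"
    unfolding q_def Q_def using psd_kernel_cross_sq_le[OF psd xs_C x] diag x by blast
  moreover have "Q \<le> real n * S"
    unfolding Q_def S_def
    by (rule quadratic_form_le_of_abs_le_1) (use psd_kernel_abs_le_1[OF psd diag le_1] xs_C in auto)
  moreover have "0 \<le> Q"
    unfolding Q_def by (rule psd_kernel_quadratic_nonneg[OF psd xs_C])
  moreover have "0 \<le> S"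
    unfolding S_def by (simp add: sum_nonneg)
  ultimately have "0 \<le> q" "q \<le> real n / (real n + \<sigma>^2)"
    using explained_variance_le[of q Q \<sigma> S "real n"] \<sigma> by auto
  moreover have "post_var k \<sigma> xs n x = 1 - q"
    unfolding post_var_def q_def u_def ..
  moreover have "1 - real n / (real n + \<sigma>^2) = \<sigma>^2 / (real n + \<sigma>^2)"
  proof -
    have "0 < real n + \<sigma>^2"
      using \<sigma> by (simp add: add_nonneg_pos)
    then show ?thesis
      by (simp add: field_simps)
  qed
  ultimately show "\<sigma>^2 / (real n + \<sigma>^2) \<le> post_var k \<sigma> xs n x" "post_var k \<sigma> xs n x \<le> 1"
    by auto
qed

lemma post_sd_bounds:
  assumes "psd_kernel C k" "\<forall>x\<in>C. k x x = 1" "\<forall>x\<in>C. \<forall>y\<in>C. k x y \<le> 1"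
    and "\<forall>i<n. xs (Suc i) \<in> C" "\<sigma> > 0" "x \<in> C"
  shows "sqrt (\<sigma>^2 / (real n + \<sigma>^2)) \<le> post_sd k \<sigma> xs n x" and "post_sd k \<sigma> xs n x \<le> 1"
  using post_var_bounds[OF assms] unfolding post_sd_def by auto

lemma post_sd_pos:
  assumes "psd_kernel C k" "\<forall>x\<in>C. k x x = 1" "\<forall>x\<in>C. \<forall>y\<in>C. k x y \<le> 1"
    and "\<forall>i<n. xs (Suc i) \<in> C" "\<sigma> > 0" "x \<in> C"
  shows "0 < post_sd k \<sigma> xs n x"
proof -
  have "0 < \<sigma>^2 / (real n + \<sigma>^2)"
    using \<open>\<sigma> > 0\<close> by (simp add: add_nonneg_pos)
  then show ?thesis
    using post_sd_bounds(1)[OF assms] by (meson order_less_le_trans real_sqrt_gt_0_iff)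
qed

lemma post_mean_bdd_below:
  assumes psd: "psd_kernel C k" and diag: "\<forall>x\<in>C. k x x = 1" and le_1: "\<forall>x\<in>C. \<forall>y\<in>C. k x y \<le> 1"
    and xs_C: "\<forall>i<n. xs (Suc i) \<in> C"
  shows "bdd_below (post_mean k \<sigma> xs ys n ` C)"
proof (rule bdd_belowI2)
  define a where "a = lin_solve n (gram_reg k \<sigma> xs) (\<lambda>i. ys (Suc i))"
  fix x assume x: "x \<in> C"
  have "- \<bar>a i\<bar> \<le> k (xs (Suc i)) x * a i" if "i < n" for i
  proof -
    have "\<bar>k (xs (Suc i)) x\<bar> \<le> 1"
      using psd_kernel_abs_le_1[OF psd diag le_1] xs_C x that by blast
    then have "\<bar>k (xs (Suc i)) x * a i\<bar> \<le> \<bar>a i\<bar>"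
      by (simp add: abs_mult mult_left_le_one_le)
    then show ?thesis
      by linarith
  qed
  then have "(\<Sum>i<n. - \<bar>a i\<bar>) \<le> post_mean k \<sigma> xs ys n x"
    unfolding post_mean_def a_def by (intro sum_mono) auto
  then show "- (\<Sum>i<n. \<bar>a i\<bar>) \<le> post_mean k \<sigma> xs ys n x"
    by (simp add: sum_negf)
qed

lemma Phi_nonneg: "0 \<le> Phi x"
  unfolding Phi_def set_lebesgue_integral_def by (intro integral_nonneg_AE) (auto simp: indicator_def)

lemma Phi_le_1: "Phi x \<le> 1"
proof -
  have "Phi x = (\<integral>u. indicator {..x} u *\<^sub>R std_normal_density u \<partial>lborel)"
    unfolding Phi_def set_lebesgue_integral_def ..
  also have "\<dots> \<le> (\<integral>u. std_normal_density u \<partial>lborel)"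
    by (intro integral_mono integrable_mult_indicator) (auto simp: indicator_def)
  also have "\<dots> = 1"
    by simp
  finally show ?thesis .
qed

lemma phi_eq_exp: "phi z = exp (- (z^2) / 2) / sqrt (2 * pi)"
  by (simp add: std_normal_density_def)

lemma phi_0_sq: "(phi 0)^2 = 1 / (2 * pi)"
  by (simp add: phi_eq_exp power_divide)

lemma phi_antimono_abs:
  assumes "\<bar>a\<bar> \<le> \<bar>b\<bar>"
  shows "phi b \<le> phi a"
proof -
  have "a^2 \<le> b^2"
    using assms by (metis abs_ge_zero power2_abs power_mono)
  then show ?thesis
    unfolding phi_eq_exp by (intro divide_right_mono) auto
qed

definition ei :: "real \<Rightarrow> real \<Rightarrow> real" where
  "ei d s = d * Phi (d / s) + s * phi (d / s)"

lemma EI_eq_ei: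
  "EI C k \<sigma> xs ys n x = ei (incumbent C k \<sigma> xs ys n - post_mean k \<sigma> xs ys n x) (post_sd k \<sigma> xs n x)"
  unfolding EI_def ei_def Let_def ..

lemma ei_le_of_nonpos:
  assumes "d \<le> 0" "0 \<le> s"
  shows "ei d s \<le> s * phi (d / s)"
  using assms Phi_nonneg[of "d / s"] unfolding ei_def by (simp add: mult_nonpos_nonneg)

lemma ei_ge_of_near_0:
  assumes \<epsilon>: "0 < \<epsilon>" and d: "- \<epsilon> < d" "d \<le> 0" and l: "0 < l" "l \<le> s"
  shows "- \<epsilon> + l * phi (\<epsilon> / l) \<le> ei d s"
proof -
  have "- \<epsilon> \<le> - \<epsilon> * Phi (d / s)"
    using Phi_le_1[of "d / s"] \<epsilon> by simp
  also have "\<dots> \<le> d * Phi (d / s)"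
    using d Phi_nonneg[of "d / s"] by (intro mult_right_mono) auto
  finally have "- \<epsilon> \<le> d * Phi (d / s)" .
  moreover have "phi (\<epsilon> / l) \<le> phi (d / s)"
  proof (rule phi_antimono_abs)
    have "\<bar>d / s\<bar> \<le> \<epsilon> / s"
      using d l divide_right_mono[of "- d" \<epsilon> s] by (simp add: abs_div)
    also have "\<dots> \<le> \<epsilon> / l"
      using \<epsilon> l by (intro divide_left_mono) auto
    finally show "\<bar>d / s\<bar> \<le> \<bar>\<epsilon> / l\<bar>"
      using \<epsilon> l by simp
  qed
  then have "l * phi (\<epsilon> / l) \<le> s * phi (d / s)"
    using l by (intro mult_mono) auto
  ultimately show ?thesis
    unfolding ei_def by linarith
qed

lemma ei_Inf_ge:
  fixes m s :: "'a \<Rightarrow> real"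
  assumes "C \<noteq> {}" and bdd: "bdd_below (m ` C)" and l: "0 < l" "\<forall>x\<in>C. l \<le> s x"
    and E: "\<forall>x\<in>C. ei (Inf (m ` C) - m x) (s x) \<le> E"
  shows "l * phi 0 \<le> E"
proof -
  txt \<open>The infimum need not be attained, so approach it and let the gap \<epsilon> tend to 0.\<close>
  have near: "- \<epsilon> + l * phi (\<epsilon> / l) \<le> E" if \<epsilon>: "0 < \<epsilon>" for \<epsilon>
  proof -
    have "\<exists>x\<in>C. m x < Inf (m ` C) + \<epsilon>"
      using cInf_less_iff[of "m ` C" "Inf (m ` C) + \<epsilon>"] bdd \<open>C \<noteq> {}\<close> \<epsilon> by simp
    then obtain x where x: "x \<in> C" "m x < Inf (m ` C) + \<epsilon>"
      by blast
    moreover have "Inf (m ` C) \<le> m x"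
      using x bdd by (intro cInf_lower) auto
    ultimately have "- \<epsilon> + l * phi (\<epsilon> / l) \<le> ei (Inf (m ` C) - m x) (s x)"
      using ei_ge_of_near_0 \<epsilon> l by simp
    also have "\<dots> \<le> E"
      using E x by blast
    finally show ?thesis .
  qed
  have "((\<lambda>\<epsilon>. - \<epsilon> + l * phi (\<epsilon> / l)) \<longlongrightarrow> - 0 + l * phi (0 / l)) (at_right 0)"
    unfolding phi_eq_exp using l by (intro tendsto_intros) auto
  moreover have "\<forall>\<^sub>F \<epsilon> in at_right 0. - \<epsilon> + l * phi (\<epsilon> / l) \<le> E"
    using near by (auto simp: eventually_at_right_field intro!: exI[of _ 1])
  ultimately have "- 0 + l * phi (0 / l) \<le> E"
    by (rule tendsto_le[OF trivial_limit_at_right_real tendsto_const])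
  then show ?thesis
    by simp
qed

lemma ei_gap_le:
  fixes v s \<xi> m :: real
  assumes v: "0 < v" "sqrt v \<le> s" and s_le_1: "s \<le> 1"
    and ei: "sqrt v * phi 0 \<le> ei (\<xi> - m) s"
  shows "m - \<xi> \<le> sqrt (ln (1 / v)) * s"
proof -
  have s: "0 < s"
    using v real_sqrt_gt_0_iff[of v] by linarith
  show ?thesis
  proof (cases "m \<le> \<xi>")
    case True
    have "sqrt v \<le> 1"
      using v s_le_1 by linarith
    then have "v \<le> 1"
      by simp
    then have "0 \<le> sqrt (ln (1 / v)) * s"
      using v s by (intro mult_nonneg_nonneg) auto
    with True show ?thesis
      by linarith
  next
    case False
    define z where "z = (\<xi> - m) / s"
    have "sqrt v * phi 0 \<le> s * phi z"
      using ei ei_le_of_nonpos[of "\<xi> - m" s] False s unfolding z_def by simp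
    also have "\<dots> \<le> phi z"
      using s s_le_1 by (intro mult_left_le_one_le) auto
    finally have "sqrt v \<le> exp (- (z^2) / 2)"
      unfolding phi_eq_exp by (simp add: field_simps)
    then have "ln (sqrt v) \<le> - (z^2) / 2"
      using ln_le_cancel_iff[of "sqrt v" "exp (- (z^2) / 2)"] v by simp
    then have "ln v / 2 \<le> - (z^2) / 2"
      using v by (simp add: ln_sqrt)
    then have "z^2 \<le> ln (1 / v)"
      using v by (simp add: ln_div)
    then have "\<bar>z\<bar> \<le> sqrt (ln (1 / v))"
      using real_sqrt_le_mono by fastforce
    then have "- z \<le> sqrt (ln (1 / v))"
      by linarith
    then have "- z * s \<le> sqrt (ln (1 / v)) * s"
      using s by (intro mult_right_mono) auto
    moreover have "- z * s = m - \<xi>"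
      unfolding z_def using s by (simp add: field_simps)
    ultimately show ?thesis
      by simp
  qed
qed

lemma EI_maximiser_mean_gap:
  assumes psd: "psd_kernel C k" and diag: "\<forall>x\<in>C. k x x = 1" and le_1: "\<forall>x\<in>C. \<forall>y\<in>C. k x y \<le> 1"
    and xs_C: "\<forall>i<n. xs (Suc i) \<in> C" and \<sigma>: "\<sigma> > 0"
    and x: "x \<in> C" and max: "\<forall>y\<in>C. EI C k \<sigma> xs ys n y \<le> EI C k \<sigma> xs ys n x"
  shows "post_mean k \<sigma> xs ys n x - incumbent C k \<sigma> xs ys n
           \<le> sqrt (ln ((real n + \<sigma>^2) / \<sigma>^2)) * post_sd k \<sigma> xs n x"
proof -
  define v where "v = \<sigma>^2 / (real n + \<sigma>^2)"
  have v: "0 < v"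
    unfolding v_def using \<sigma> by (simp add: add_nonneg_pos)
  note sd_bounds = post_sd_bounds[OF psd diag le_1 xs_C \<sigma>, folded v_def]
  have "sqrt v * phi 0 \<le> EI C k \<sigma> xs ys n x"
    by (rule ei_Inf_ge[where m = "post_mean k \<sigma> xs ys n" and s = "post_sd k \<sigma> xs n"])
      (use x max sd_bounds post_mean_bdd_below[OF psd diag le_1 xs_C] v
        in \<open>auto simp: EI_eq_ei incumbent_def\<close>)
  then have "post_mean k \<sigma> xs ys n x - incumbent C k \<sigma> xs ys n \<le> sqrt (ln (1 / v)) * post_sd k \<sigma> xs n x"
    using ei_gap_le v sd_bounds x unfolding EI_eq_ei by blast
  then show ?thesis
    unfolding v_def by simp
qed

lemma beta_nonneg:
  assumes "1 \<le> c" "1 \<le> t" "0 < \<delta>" "\<delta> \<le> 1"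
  shows "0 \<le> beta c \<delta> t"
proof -
  have "9 * 1 \<le> pi^2 * (real t)^2"
    using power_mono[of 3 pi 2] pi_gt3 assms by (intro mult_mono) auto
  then have "1 * 1 \<le> (8 * real c) * (pi^2 * (real t)^2 / 6)"
    using assms by (intro mult_mono) auto
  also have "\<dots> \<le> 8 * real c * (pi^2 * (real t)^2 / 6) / \<delta>"
    using assms calculation by (simp add: le_divide_eq mult_le_cancel_left1)
  finally show ?thesis
    unfolding beta_def by simp
qed

theorem mainTheorem5:
  fixes C :: "(real^'n) set" and k :: "real^'n \<Rightarrow> real^'n \<Rightarrow> real"
    and f :: "real^'n \<Rightarrow> real" and xs :: "nat \<Rightarrow> real^'n"
    and eps ys :: "nat \<Rightarrow> real" and r L \<sigma> \<delta> :: real and xstar :: "real^'n"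
    and Ct :: "nat \<Rightarrow> (real^'n) set" and proj :: "nat \<Rightarrow> real^'n \<Rightarrow> real^'n"
    and t :: nat
  assumes r_pos: "r > 0"
    and C_compact: "compact C"
    and C_box: "\<forall>x\<in>C. \<forall>i. 0 \<le> x$i \<and> x$i \<le> r"
    and k_psd: "psd_kernel C k"
    and k_le1: "\<forall>x\<in>C. \<forall>y\<in>C. k x y \<le> 1"
    and k_diag: "\<forall>x\<in>C. k x x = 1"
    and L_ge: "L \<ge> 1 / (r * real CARD('n))"
    and f_lip: "\<forall>x\<in>C. \<forall>y\<in>C. \<bar>f x - f y\<bar> \<le> L * l1dist x y"
    and xstar_min: "xstar \<in> C" "\<forall>x\<in>C. f xstar \<le> f x"
    and sigma_pos: "\<sigma> > 0"
    and obs: "\<forall>s\<ge>1. ys s = f (xs s) + eps s"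
    and gp_ei: "\<forall>s\<ge>1. xs s \<in> C \<and>
                  (\<forall>x\<in>C. EI C k \<sigma> xs ys (s - 1) x \<le> EI C k \<sigma> xs ys (s - 1) (xs s))"
    and discr: "\<forall>s\<ge>1. finite (Ct s) \<and> Ct s \<subseteq> C \<and>
                  real (card (Ct s)) = (L * r * real CARD('n) * (real s)^2) ^ CARD('n) \<and>
                  (\<forall>x\<in>C. proj s x \<in> Ct s \<and> (\<forall>c\<in>Ct s. l1dist x (proj s x) \<le> l1dist x c) \<and>
                           l1dist x (proj s x) \<le> 1 / (L * (real s)^2))"
    and delta: "0 < \<delta>" "\<delta> < 1"
    and t_pos: "t \<ge> 1"
    and Er: "(\<forall>x\<in>Ct t. \<bar>f x - post_mean k \<sigma> xs ys (t - 1) x\<bar>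
                 \<le> sqrt (beta (card (Ct t)) \<delta> t) * post_sd k \<sigma> xs (t - 1) x) \<and>
             \<bar>f (xs t) - post_mean k \<sigma> xs ys (t - 1) (xs t)\<bar>
                 \<le> sqrt (beta (card (Ct t)) \<delta> t) * post_sd k \<sigma> xs (t - 1) (xs t)"
  shows "f (xs t) - f xstar \<le>
     (sqrt (ln ((real t - 1 + \<sigma>^2) / (2 * pi * (phi 0)^2 * \<sigma>^2))) + phi 0
        + sqrt (beta (card (Ct t)) \<delta> t)) * post_sd k \<sigma> xs (t - 1) (xs t)
     + 1.328 * sqrt (beta (card (Ct t)) \<delta> t) * post_sd k \<sigma> xs (t - 1) (proj t xstar)
     + 1 / (real t)^2"
proof -
  define n where "n = t - 1"
  define b where "b = sqrt (beta (card (Ct t)) \<delta> t)"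
  define p where "p = proj t xstar"
  have xs_C: "\<forall>i<n. xs (Suc i) \<in> C" and xt_C: "xs t \<in> C"
    and EI_max: "\<forall>x\<in>C. EI C k \<sigma> xs ys n x \<le> EI C k \<sigma> xs ys n (xs t)"
    using gp_ei t_pos unfolding n_def by auto
  have p: "p \<in> Ct t" "p \<in> C" "l1dist xstar p \<le> 1 / (L * (real t)^2)" and "finite (Ct t)"
    using discr t_pos xstar_min(1) unfolding p_def by auto
  have "0 < L"
    using L_ge r_pos by (smt (verit) divide_pos_pos of_nat_0_less_iff zero_less_card_finite mult_pos_pos)
  then have f_p: "f p - f xstar \<le> 1 / (real t)^2"
    using f_lip[rule_format, OF p(2) xstar_min(1)] p(3) mult_left_mono[OF p(3), of L]
    by (simp add: l1dist_def abs_minus_commute)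
  have b: "0 \<le> b"
    unfolding b_def using beta_nonneg[of "card (Ct t)" t \<delta>] p(1) \<open>finite (Ct t)\<close> t_pos delta
    by (simp add: Suc_le_eq card_gt_0_iff) blast
  note sd_pos = post_sd_pos[OF k_psd k_diag k_le1 xs_C sigma_pos]
  have gap: "post_mean k \<sigma> xs ys n (xs t) - incumbent C k \<sigma> xs ys n
               \<le> sqrt (ln ((real n + \<sigma>^2) / \<sigma>^2)) * post_sd k \<sigma> xs n (xs t)"
    by (rule EI_maximiser_mean_gap[OF k_psd k_diag k_le1 xs_C sigma_pos xt_C EI_max])
  have "incumbent C k \<sigma> xs ys n \<le> post_mean k \<sigma> xs ys n p"
    unfolding incumbent_def
    by (rule cInf_lower) (use p post_mean_bdd_below[OF k_psd k_diag k_le1 xs_C] in auto)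
  moreover have "f (xs t) \<le> post_mean k \<sigma> xs ys n (xs t) + b * post_sd k \<sigma> xs n (xs t)"
    and "post_mean k \<sigma> xs ys n p - b * post_sd k \<sigma> xs n p \<le> f p"
    using Er p(1) unfolding b_def n_def by auto
  ultimately have "f (xs t) - f xstar \<le> sqrt (ln ((real n + \<sigma>^2) / \<sigma>^2)) * post_sd k \<sigma> xs n (xs t)
      + b * post_sd k \<sigma> xs n (xs t) + b * post_sd k \<sigma> xs n p + 1 / (real t)^2"
    using gap f_p by linarith
  also have "\<dots> \<le> (sqrt (ln ((real n + \<sigma>^2) / \<sigma>^2)) + phi 0 + b) * post_sd k \<sigma> xs n (xs t)
      + 1.328 * b * post_sd k \<sigma> xs n p + 1 / (real t)^2"
  proof -
    have "0 \<le> phi 0 * post_sd k \<sigma> xs n (xs t)"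
      using sd_pos[OF xt_C] by simp
    moreover have "b * post_sd k \<sigma> xs n p \<le> 1.328 * b * post_sd k \<sigma> xs n p"
      using sd_pos[OF p(2)] b by simp
    ultimately show ?thesis
      by (simp add: algebra_simps)
  qed
  also have "(real n + \<sigma>^2) / \<sigma>^2 = (real t - 1 + \<sigma>^2) / (2 * pi * (phi 0)^2 * \<sigma>^2)"
    using t_pos by (simp add: n_def phi_0_sq of_nat_diff)
  finally show ?thesis
    unfolding b_def p_def n_def .
qed

end
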